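(* Let $h\ge 4$ be an integer and let $\hat e(h,4)=4/3$ if $h\equiv 1\pmod 3$, $\hat e(h,4)=1$ if $h\equiv 0\pmod 3$, and $\hat e(h,4)=2/3$ if $h\equiv 2 \pmod 3$. Then there exists $W\in\mathcal W^2_{h\times 4}$ with $e(W)=\hat e(h,4)$, i.e. $|W|_\blacksquare = 8h/3+\hat e(h,4)$. Moreover, if $h>4$, such a $W$ can be chosen to be a snake.
   Context: A 2-dimensional binary word of dimensions $h\times w$ is an $h\times w$ matrix $W$ with entries in $\{\square,\blacksquare\}$; entries $\blacksquare$ are filled cells, entries $\square$ empty cells, and $|W|_\blacksquare$ is the number of filled cells. Two cells $(i,j),(i',j')$ are adjacent if $|i-i'|+|j-j'|=1$; the degree of a filled cell is the number of filled cells adjacent to it. $\mathcal W^2_{h\times w}$ is the set of $h\times w$ binary words in which every filled cell has degree at most $2$. The excess of an $a\times b$ word $U$ is $e(U)=|U|_\blacksquare-2ab/3$. A word $W$ is a snake if its set of filled cells is nonempty and the graph whose vertices are the filled cells, with edges between adjacent filled cells, is a path. *)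

theory Defs
  imports Main "HOL.Real"
begin

text \<open>A binary word of dimensions h x w is represented by its set of filled cells,
  a subset of {0..<h} x {0..<w} (row index, column index).\<close>

definition adjacent :: "nat \<times> nat \<Rightarrow> nat \<times> nat \<Rightarrow> bool" where
  "adjacent c d \<longleftrightarrow>
     \<bar>int (fst c) - int (fst d)\<bar> + \<bar>int (snd c) - int (snd d)\<bar> = 1"

definition degree_in :: "(nat \<times> nat) set \<Rightarrow> nat \<times> nat \<Rightarrow> nat" where
  "degree_in W c = card {d \<in> W. adjacent c d}"

definition words2 :: "nat \<Rightarrow> nat \<Rightarrow> (nat \<times> nat) set set" where
  "words2 h w = {W. W \<subseteq> {0..<h} \<times> {0..<w} \<and> (\<forall>c\<in>W. degree_in W c \<le> 2)}"

definition excess :: "nat \<Rightarrow> nat \<Rightarrow> (nat \<times> nat) set \<Rightarrow> real" where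
  "excess a b U = real (card U) - 2 * real a * real b / 3"

definition snake :: "(nat \<times> nat) set \<Rightarrow> bool" where
  "snake W \<longleftrightarrow> (\<exists>xs. xs \<noteq> [] \<and> distinct xs \<and> set xs = W \<and>
     (\<forall>c\<in>W. \<forall>d\<in>W. adjacent c d \<longleftrightarrow>
        (\<exists>i. Suc i < length xs \<and> {xs ! i, xs ! Suc i} = {c, d})))"

definition ehat4 :: "nat \<Rightarrow> real" where
  "ehat4 h = (if h mod 3 = 1 then 4/3 else if h mod 3 = 0 then 1 else 2/3)"

end

theory Submission
  imports Defs
begin

text \<open>For \<open>h \<ge> 5\<close> the word is an induced path in the \<open>h \<times> 4\<close> grid, built by
  induction on \<open>h\<close> in steps of 6. A path of height \<open>h\<close> whose two ends lie in the top
  row (columns 0 and 2, or 0 and 3) and whose top row leaves column 1 empty is pushed down by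
  6 rows and wrapped by a band of 16 cells; as 16 cells per 6 rows is exactly the density
  8/3 per row, the excess is unchanged. The band touches the old path only at its two ends,
  since the lowest band row faces only the end cells and the empty column 1. Bases of
  height 3 and 6 (excess 1) and of height 2 and 5 (excess 2/3) settle the residues 0 and 2
  mod 3; for residue 1 a 4-row cap of 11 cells is put on top of an excess-1 path. For
  \<open>h = 4\<close> the 12-cell frame of the square has excess 4/3 (it is a cycle, not a snake).\<close>

definition induced_path :: "('a \<Rightarrow> 'a \<Rightarrow> bool) \<Rightarrow> 'a list \<Rightarrow> bool" where
  "induced_path adj xs \<longleftrightarrow> distinct xs \<and>
     (\<forall>c\<in>set xs. \<forall>d\<in>set xs.
        adj c d \<longleftrightarrow> (c, d) \<in> set (zip xs (tl xs)) \<or> (d, c) \<in> set (zip xs (tl xs)))"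

lemma set_zip_tl_append:
  assumes "xs \<noteq> []" "ys \<noteq> []"
  shows "set (zip (xs @ ys) (tl (xs @ ys))) =
    set (zip xs (tl xs)) \<union> set (zip ys (tl ys)) \<union> {(last xs, hd ys)}"
  using assms
proof (induction xs)
  case (Cons x xs)
  then show ?case by (cases xs; cases ys) auto
qed simp

lemma in_set_zip_tl_iff:
  "(c, d) \<in> set (zip xs (tl xs)) \<longleftrightarrow> (\<exists>i. Suc i < length xs \<and> xs ! i = c \<and> xs ! Suc i = d)"
  by (auto simp: in_set_zip nth_tl less_diff_conv)

lemma in_set_zip_tl_D: "(c, d) \<in> set (zip xs (tl xs)) \<Longrightarrow> c \<in> set xs \<and> d \<in> set xs"
  by (metis in_set_zipE list.sel(2) list.set_sel(2))

lemma induced_path_append: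
  assumes "symp adj" "induced_path adj xs" "induced_path adj ys" "xs \<noteq> []" "ys \<noteq> []"
    and "set xs \<inter> set ys = {}"
    and "\<forall>c\<in>set xs. \<forall>d\<in>set ys. adj c d \<longleftrightarrow> c = last xs \<and> d = hd ys"
  shows "induced_path adj (xs @ ys)"
proof -
  note E_append = set_zip_tl_append[OF assms(4,5)]
  have ends: "last xs \<in> set xs" "hd ys \<in> set ys" using assms(4,5) by auto
  have "adj c d \<longleftrightarrow> (c, d) \<in> set (zip (xs @ ys) (tl (xs @ ys))) \<or>
      (d, c) \<in> set (zip (xs @ ys) (tl (xs @ ys)))"
    if cd: "c \<in> set (xs @ ys)" "d \<in> set (xs @ ys)" for c d
  proof -
    consider "c \<in> set xs" "d \<in> set xs" | "c \<in> set ys" "d \<in> set ys"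
      | "c \<in> set xs" "d \<in> set ys" | "c \<in> set ys" "d \<in> set xs"
      using cd by auto
    then show ?thesis
    proof cases
      case 1
      then show ?thesis
        using assms(2,6) ends by (auto simp: induced_path_def E_append dest: in_set_zip_tl_D)
    next
      case 2
      then show ?thesis
        using assms(3,6) ends by (auto simp: induced_path_def E_append dest: in_set_zip_tl_D)
    next
      case 3
      then show ?thesis
        using assms(6,7) ends by (auto simp: E_append disjoint_iff dest: in_set_zip_tl_D)
    next
      case 4
      then show ?thesis
        using assms(1,6,7) ends
        by (auto simp: E_append disjoint_iff dest: in_set_zip_tl_D sympD)
    qed
  qed
  then show ?thesis using assms(2,3,6) by (auto simp: induced_path_def)
qed

lemma induced_path_map:
  assumes "inj f" "\<And>x y. adj' (f x) (f y) \<longleftrightarrow> adj x y" "induced_path adj xs"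
  shows "induced_path adj' (map f xs)"
proof -
  have "set (zip (map f xs) (tl (map f xs))) = map_prod f f ` set (zip xs (tl xs))"
    by (simp add: map_tl[symmetric] zip_map_map map_prod_def)
  moreover have "(f c, f d) \<in> map_prod f f ` A \<longleftrightarrow> (c, d) \<in> A" for c d A
    using injD[OF assms(1)] by auto
  ultimately show ?thesis
    using assms by (auto simp: induced_path_def distinct_map inj_on_subset[OF assms(1)])
qed

lemma successor_in_distinct_unique:
  assumes "distinct xs" "(c, d) \<in> set (zip xs (tl xs))" "(c, d') \<in> set (zip xs (tl xs))"
  shows "d = d'"
  using assms by (auto simp: in_set_zip_tl_iff nth_eq_iff_index_eq)

lemma predecessor_in_distinct_unique:
  assumes "distinct xs" "(d, c) \<in> set (zip xs (tl xs))" "(d', c) \<in> set (zip xs (tl xs))"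
  shows "d = d'"
  using assms by (auto simp: in_set_zip_tl_iff nth_eq_iff_index_eq)

lemma induced_path_degree_le_2:
  assumes "induced_path adj xs" "c \<in> set xs"
  shows "card {d \<in> set xs. adj c d} \<le> 2"
proof -
  let ?E = "set (zip xs (tl xs))"
  let ?succ = "{d \<in> set xs. (c, d) \<in> ?E}" and ?pred = "{d \<in> set xs. (d, c) \<in> ?E}"
  have dist: "distinct xs" using assms(1) by (simp add: induced_path_def)
  have "card ?succ \<le> 1"
    using successor_in_distinct_unique[OF dist] by (auto simp: card_le_Suc0_iff_eq)
  moreover have "card ?pred \<le> 1"
    using predecessor_in_distinct_unique[OF dist] by (auto simp: card_le_Suc0_iff_eq)
  moreover have "{d \<in> set xs. adj c d} \<subseteq> ?succ \<union> ?pred"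
    using assms by (auto simp: induced_path_def)
  then have "card {d \<in> set xs. adj c d} \<le> card (?succ \<union> ?pred)"
    by (intro card_mono) auto
  ultimately show ?thesis using card_Un_le[of ?succ ?pred] by linarith
qed

lemma induced_path_snake: "xs \<noteq> [] \<Longrightarrow> induced_path adjacent xs \<Longrightarrow> snake (set xs)"
  unfolding snake_def induced_path_def in_set_zip_tl_iff
  by (rule exI[of _ xs]) (auto simp: doubleton_eq_iff)

definition shift_rows :: "nat \<Rightarrow> nat \<times> nat \<Rightarrow> nat \<times> nat" where
  "shift_rows k = (\<lambda>(r, c). (r + k, c))"

lemma shift_rows_Pair [simp]: "shift_rows k (r, c) = (r + k, c)"
  by (simp add: shift_rows_def)

lemma inj_shift_rows: "inj (shift_rows k)"
  by (auto simp: inj_def shift_rows_def)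

lemma adjacent_shift_rows [simp]: "adjacent (shift_rows k c) (shift_rows k d) \<longleftrightarrow> adjacent c d"
  by (cases c; cases d) (simp add: adjacent_def)

lemma symp_adjacent: "symp adjacent"
  by (auto simp: symp_def adjacent_def)

lemma adjacent_shift_rows_iff:
  assumes "fst c < k"
  shows "adjacent c (shift_rows k d) \<longleftrightarrow> fst c = k - 1 \<and> d = (0, snd c)"
  using assms by (cases c; cases d) (auto simp: adjacent_def)

definition grid_path :: "nat \<Rightarrow> nat \<Rightarrow> nat \<Rightarrow> (nat \<times> nat) list \<Rightarrow> bool" where
  "grid_path h a b xs \<longleftrightarrow> xs \<noteq> [] \<and> induced_path adjacent xs \<and>
     set xs \<subseteq> {0..<h} \<times> {0..<4} \<and> hd xs = (0, a) \<and> last xs = (0, b) \<and> (0, 1) \<notin> set xs"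

lemma adjacent_shifted_grid_path:
  assumes "grid_path h a b xs" "d \<in> set xs" "fst c < k" "fst c = k - 1 \<longrightarrow> snd c \<in> {j, 1}"
  shows "adjacent c (shift_rows k d) \<longleftrightarrow> c = (k - 1, j) \<and> d = (0, j)"
  using assms by (cases c) (auto simp: adjacent_shift_rows_iff grid_path_def)

lemma grid_path_extend_top:
  assumes xs: "grid_path h a b xs"
    and L: "induced_path adjacent L" "L \<noteq> []" "set L \<subseteq> {0..<k} \<times> {0..<4}"
      "last L = (k - 1, a)" "\<forall>c\<in>set L. fst c = k - 1 \<longrightarrow> snd c \<in> {a, 1}"
  shows "induced_path adjacent (L @ map (shift_rows k) xs)"
proof (rule induced_path_append[OF symp_adjacent L(1)])
  show "induced_path adjacent (map (shift_rows k) xs)"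
    using xs by (auto simp: grid_path_def intro: induced_path_map[OF inj_shift_rows])
  show "set L \<inter> set (map (shift_rows k) xs) = {}"
    using L(3) by (force simp: shift_rows_def)
  show "\<forall>c\<in>set L. \<forall>d\<in>set (map (shift_rows k) xs).
      adjacent c d \<longleftrightarrow> c = last L \<and> d = hd (map (shift_rows k) xs)"
  proof (intro ballI)
    fix c d assume c: "c \<in> set L" and "d \<in> set (map (shift_rows k) xs)"
    then obtain d' where d': "d' \<in> set xs" "d = shift_rows k d'" by auto
    have "fst c < k" using c L(3) by auto
    then have "adjacent c d \<longleftrightarrow> c = (k - 1, a) \<and> d' = (0, a)"
      using adjacent_shifted_grid_path[OF xs d'(1), of c k a] c d'(2) L(5) by blast
    moreover have "hd (map (shift_rows k) xs) = shift_rows k (0, a)"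
      using xs by (simp add: grid_path_def hd_map)
    ultimately show "adjacent c d \<longleftrightarrow> c = last L \<and> d = hd (map (shift_rows k) xs)"
      using L(4) d'(2) injD[OF inj_shift_rows] by metis
  qed
qed (use xs L in \<open>auto simp: grid_path_def\<close>)

lemma grid_path_wrap:
  assumes xs: "grid_path h a b xs"
    and L: "induced_path adjacent L" "L \<noteq> []" "set L \<subseteq> {0..<k} \<times> {0..<4}"
      "last L = (k - 1, a)" "\<forall>c\<in>set L. fst c = k - 1 \<longrightarrow> snd c \<in> {a, 1}"
    and R: "induced_path adjacent R" "R \<noteq> []" "set R \<subseteq> {0..<k} \<times> {0..<4}"
      "hd R = (k - 1, b)" "\<forall>c\<in>set R. fst c = k - 1 \<longrightarrow> snd c \<in> {b, 1}"
    and LR: "set L \<inter> set R = {}" "\<forall>c\<in>set L. \<forall>d\<in>set R. \<not> adjacent c d"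
    and ends: "hd L = (0, a')" "last R = (0, b')" "(0, 1) \<notin> set L \<union> set R"
  shows "grid_path (h + k) a' b' (L @ map (shift_rows k) xs @ R)"
proof -
  let ?M = "L @ map (shift_rows k) xs"
  have xs_ne: "xs \<noteq> []" and last_xs: "last xs = (0, b)"
    and xs_grid: "set xs \<subseteq> {0..<h} \<times> {0..<4}"
    using xs by (auto simp: grid_path_def)
  have last_M: "last ?M = shift_rows k (0, b)"
    using xs_ne last_xs by (simp add: last_map)
  have "induced_path adjacent (?M @ R)"
  proof (rule induced_path_append[OF symp_adjacent grid_path_extend_top[OF xs L] R(1)])
    show "set ?M \<inter> set R = {}"
      using LR(1) R(3) by (force simp: shift_rows_def)
    show "\<forall>c\<in>set ?M. \<forall>d\<in>set R. adjacent c d \<longleftrightarrow> c = last ?M \<and> d = hd R"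
    proof (intro ballI)
      fix c d assume c: "c \<in> set ?M" and d: "d \<in> set R"
      have "fst d < k" using d R(3) by auto
      show "adjacent c d \<longleftrightarrow> c = last ?M \<and> d = hd R"
      proof (cases "c \<in> set L")
        case True
        then show ?thesis using LR(2) d L(3) last_M by auto
      next
        case False
        then obtain c' where c': "c' \<in> set xs" "c = shift_rows k c'" using c by auto
        have "adjacent d (shift_rows k c') \<longleftrightarrow> d = (k - 1, b) \<and> c' = (0, b)"
          using adjacent_shifted_grid_path[OF xs c'(1) \<open>fst d < k\<close>, of b] d R(5) by blast
        then show ?thesis
          using c'(2) R(4) last_M injD[OF inj_shift_rows] sympD[OF symp_adjacent] by metis
      qed
    qed
  qed (use L(2) R(2) in auto)
  moreover have "k > 0" using L(2,3) by (cases L) auto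
  ultimately show ?thesis
    using L(2,3) R(2,3) xs_grid ends by (auto simp: grid_path_def)
qed

definition I3 :: "(nat \<times> nat) list" where
  "I3 = [(0,0),(1,0),(2,0),(2,1),(2,2),(2,3),(1,3),(0,3),(0,2)]"

definition I6 :: "(nat \<times> nat) list" where
  "I6 = [(0,0),(1,0),(1,1),(2,1),(3,1),(3,0),(4,0),(5,0),(5,1),(5,2),(4,2),(4,3),(3,3),(2,3),
    (1,3),(0,3),(0,2)]"

definition I_down :: "(nat \<times> nat) list" where
  "I_down = [(0,0),(1,0),(1,1),(2,1),(3,1),(3,0),(4,0),(5,0)]"

definition I_up :: "(nat \<times> nat) list" where
  "I_up = [(5,2),(4,2),(4,3),(3,3),(2,3),(1,3),(0,3),(0,2)]"

definition J2 :: "(nat \<times> nat) list" where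
  "J2 = [(0,0),(1,0),(1,1),(1,2),(0,2),(0,3)]"

definition J5 :: "(nat \<times> nat) list" where
  "J5 = [(0,0),(1,0),(2,0),(3,0),(4,0),(4,1),(4,2),(4,3),(3,3),(2,3),(2,2),(1,2),(0,2),(0,3)]"

definition J_down :: "(nat \<times> nat) list" where
  "J_down = [(0,0),(1,0),(2,0),(3,0),(3,1),(4,1),(5,1),(5,0)]"

definition J_up :: "(nat \<times> nat) list" where
  "J_up = [(5,3),(4,3),(3,3),(2,3),(2,2),(1,2),(0,2),(0,3)]"

definition cap :: "(nat \<times> nat) list" where
  "cap = [(1,0),(0,0),(0,1),(0,2),(0,3),(1,3),(2,3),(2,2),(2,1),(3,1),(3,0)]"

lemma grid_path_I3: "grid_path 3 0 2 I3"
  by (simp add: grid_path_def I3_def induced_path_def adjacent_def)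

lemma grid_path_I6: "grid_path 6 0 2 I6"
  by (simp add: grid_path_def I6_def induced_path_def adjacent_def)

lemma grid_path_J2: "grid_path 2 0 3 J2"
  by (simp add: grid_path_def J2_def induced_path_def adjacent_def)

lemma grid_path_J5: "grid_path 5 0 3 J5"
  by (simp add: grid_path_def J5_def induced_path_def adjacent_def)

lemma grid_path_wrap_I:
  "grid_path h 0 2 xs \<Longrightarrow> grid_path (h + 6) 0 2 (I_down @ map (shift_rows 6) xs @ I_up)"
  by (erule grid_path_wrap) (simp_all add: I_down_def I_up_def induced_path_def adjacent_def)

lemma grid_path_wrap_J:
  "grid_path h 0 3 xs \<Longrightarrow> grid_path (h + 6) 0 3 (J_down @ map (shift_rows 6) xs @ J_up)"
  by (erule grid_path_wrap) (simp_all add: J_down_def J_up_def induced_path_def adjacent_def)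

lemma induced_path_cap:
  "grid_path h 0 2 xs \<Longrightarrow> induced_path adjacent (cap @ map (shift_rows 4) xs)"
  by (erule grid_path_extend_top) (simp_all add: cap_def induced_path_def adjacent_def)

fun path_I :: "nat \<Rightarrow> (nat \<times> nat) list" where
  "path_I 0 = I3"
| "path_I (Suc 0) = I6"
| "path_I (Suc (Suc n)) = I_down @ map (shift_rows 6) (path_I n) @ I_up"

fun path_J :: "nat \<Rightarrow> (nat \<times> nat) list" where
  "path_J 0 = J2"
| "path_J (Suc 0) = J5"
| "path_J (Suc (Suc n)) = J_down @ map (shift_rows 6) (path_J n) @ J_up"

lemma grid_path_path_I: "grid_path (3 * n + 3) 0 2 (path_I n)"
proof (induction n rule: path_I.induct)
  case (3 n)
  have "3 * Suc (Suc n) + 3 = (3 * n + 3) + 6" by simp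
  then show ?case using grid_path_wrap_I[OF "3"] by simp
qed (simp_all add: grid_path_I3 grid_path_I6)

lemma grid_path_path_J: "grid_path (3 * n + 2) 0 3 (path_J n)"
proof (induction n rule: path_J.induct)
  case (3 n)
  have "3 * Suc (Suc n) + 2 = (3 * n + 2) + 6" by simp
  then show ?case using grid_path_wrap_J[OF "3"] by simp
qed (simp_all add: grid_path_J2[unfolded numeral_2_eq_2] grid_path_J5)

lemma length_path_I: "length (path_I n) = 8 * n + 9"
  by (induction n rule: path_I.induct) (simp_all add: I3_def I6_def I_down_def I_up_def)

lemma length_path_J: "length (path_J n) = 8 * n + 6"
  by (induction n rule: path_J.induct) (simp_all add: J2_def J5_def J_down_def J_up_def)

lemma induced_path_in_words2:
  assumes "induced_path adjacent xs" "set xs \<subseteq> {0..<h} \<times> {0..<w}"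
  shows "set xs \<in> words2 h w"
  using assms induced_path_degree_le_2 by (auto simp: words2_def degree_in_def)

lemma excess_induced_path:
  "induced_path adj xs \<Longrightarrow> excess h w (set xs) = real (length xs) - 2 * real h * real w / 3"
  by (simp add: excess_def induced_path_def distinct_card)

lemma induced_path_with_excess_ehat4:
  assumes "h \<ge> 5"
  obtains xs where "xs \<noteq> []" "induced_path adjacent xs" "set xs \<subseteq> {0..<h} \<times> {0..<4}"
    "real (length xs) - 2 * real h * 4 / 3 = ehat4 h"
proof -
  have "(\<exists>n. h = 3 * n + 3) \<or> (\<exists>n. h = 3 * n + 7) \<or> (\<exists>n. h = 3 * n + 2)"
    using assms by presburger
  then consider (zero) n where "h = 3 * n + 3" | (one) n where "h = 3 * n + 7"
    | (two) n where "h = 3 * n + 2"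
    by blast
  then show thesis
  proof cases
    case zero
    have "h mod 3 = 0" using zero by presburger
    then have "ehat4 h = 1" by (simp add: ehat4_def)
    then show thesis
      using that[of "path_I n"] grid_path_path_I[of n] zero
      by (simp add: grid_path_def length_path_I field_simps)
  next
    case one
    let ?xs = "cap @ map (shift_rows 4) (path_I n)"
    have "h mod 3 = 1" using one by presburger
    then have "ehat4 h = 4 / 3" by (simp add: ehat4_def)
    moreover have "set ?xs \<subseteq> {0..<h} \<times> {0..<4}"
      using grid_path_path_I[of n] one by (auto simp: grid_path_def cap_def)
    ultimately show thesis
      using that[of ?xs] induced_path_cap[OF grid_path_path_I] one
      by (simp add: length_path_I cap_def field_simps)
  next
    case two
    have "h mod 3 = 2" using two by presburger
    then have "ehat4 h = 2 / 3" by (simp add: ehat4_def)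
    then show thesis
      using that[of "path_J n"] grid_path_path_J[of n] two
      by (simp add: grid_path_def length_path_J field_simps)
  qed
qed

definition frame4 :: "(nat \<times> nat) list" where
  "frame4 = [(0,0),(0,1),(0,2),(0,3),(1,0),(1,3),(2,0),(2,3),(3,0),(3,1),(3,2),(3,3)]"

lemma frame4_in_words2: "set frame4 \<in> words2 4 4"
proof -
  have "degree_in (set frame4) c \<le> length (filter (adjacent c) frame4)" for c
    using card_length[of "filter (adjacent c) frame4"] by (simp add: degree_in_def)
  moreover have "\<forall>c\<in>set frame4. length (filter (adjacent c) frame4) \<le> 2"
    by (simp add: frame4_def adjacent_def)
  moreover have "set frame4 \<subseteq> {0..<4} \<times> {0..<4}"
    by (simp add: frame4_def)
  ultimately show ?thesis
    unfolding words2_def using order_trans by blast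
qed

lemma card_frame4: "card (set frame4) = 12"
  by (simp add: frame4_def)

theorem lemma4:
  fixes h :: nat
  assumes "h \<ge> 4"
  shows "(\<exists>W \<in> words2 h 4. excess h 4 W = ehat4 h) \<and>
         (h > 4 \<longrightarrow> (\<exists>W \<in> words2 h 4. excess h 4 W = ehat4 h \<and> snake W))"
proof (cases "h = 4")
  case True
  have "excess 4 4 (set frame4) = ehat4 4"
    by (simp add: excess_def card_frame4 ehat4_def)
  then show ?thesis using True frame4_in_words2 by auto
next
  case False
  with assms have "h \<ge> 5" by simp
  then obtain xs where xs: "xs \<noteq> []" "induced_path adjacent xs"
    "set xs \<subseteq> {0..<h} \<times> {0..<4}" "real (length xs) - 2 * real h * 4 / 3 = ehat4 h"
    by (rule induced_path_with_excess_ehat4)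
  have "set xs \<in> words2 h 4" "excess h 4 (set xs) = ehat4 h" "snake (set xs)"
    using induced_path_in_words2[OF xs(2,3)] excess_induced_path[OF xs(2)] xs(4)
      induced_path_snake[OF xs(1,2)] by simp_all
  then show ?thesis by blast
qed

end
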